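(* Let $n\ge k\ge 2$ be integers. Then \[ \mathsf{opt}_{\operatorname{bandit}}^{\operatorname{det}}(n,k)\le k\ln(n/k)+k-1. \]
   Context: Prediction with expert advice in the realizable case: $\mathcal{Y}=\{1,\dots,k\}$, $\mathcal{X}=[k]^n$, experts $h_i(x)=x_i$, $i=1,\dots,n$. $\mathcal{P}_0$ is the set of finite sequences of examples in $\mathcal{X}\times\mathcal{Y}$ consistent with some $h_i$ (no errors). Bandit feedback: each round the adversary presents $x_t$, a deterministic learner predicts $\hat y_t$ as a function of past observations and $x_t$, and learns only whether $\hat y_t$ equals the true label $y_t$. $\mathsf{opt}_{\operatorname{bandit}}^{\operatorname{det}}(n,k)$ is the infimum over deterministic learners of the supremum over $S\in\mathcal{P}_0$ of the number of mistakes ($\hat y_t\ne y_t$). *)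

theory Defs
  imports Complex_Main "HOL-Library.Extended_Nat"
begin

text \<open>Instance space X = [k]^n: lists of length n with entries in {1..k}.
  Coordinate i (1 \<le> i \<le> n) of x is  x ! (i - 1).  Labels Y = {1..k}.\<close>

definition inst_space :: "nat \<Rightarrow> nat \<Rightarrow> nat list set" where
  "inst_space n k = {x. length x = n \<and> (\<forall>v\<in>set x. v \<in> {1..k})}"

definition expert :: "nat \<Rightarrow> nat list \<Rightarrow> nat" where
  "expert i x = x ! (i - 1)"

definition realizable_seqs :: "nat \<Rightarrow> nat \<Rightarrow> (nat list \<times> nat) list set" where
  "realizable_seqs n k = {S. (\<forall>(x, y)\<in>set S. x \<in> inst_space n k \<and> y \<in> {1..k}) \<and>
      (\<exists>i\<in>{1..n}. \<forall>(x, y)\<in>set S. y = expert i x)}"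

text \<open>A deterministic bandit learner maps the history of past observations
  (instance, own prediction, whether it was correct) and the current instance
  to a prediction in Y.\<close>
type_synonym learner = "(nat list \<times> nat \<times> bool) list \<Rightarrow> nat list \<Rightarrow> nat"

definition bandit_learners :: "nat \<Rightarrow> learner set" where
  "bandit_learners k = {L. \<forall>h x. L h x \<in> {1..k}}"

fun mistakes :: "learner \<Rightarrow> (nat list \<times> nat \<times> bool) list \<Rightarrow> (nat list \<times> nat) list \<Rightarrow> nat" where
  "mistakes L hist [] = 0"
| "mistakes L hist ((x, y) # S) =
     (let p = L hist x in (if p \<noteq> y then 1 else 0) + mistakes L (hist @ [(x, p, p = y)]) S)"

definition opt_bandit_det :: "nat \<Rightarrow> nat \<Rightarrow> enat" where
  "opt_bandit_det n k =
     (INF L\<in>bandit_learners k. SUP S\<in>realizable_seqs n k. enat (mistakes L [] S))"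

end

theory Submission
  imports Defs
begin

text \<open>The learner keeps the version space V of experts consistent with all feedback so far
  and predicts the label with the most votes in V.  On a mistake the c experts that voted for
  the prediction leave V, and c \<ge> |V|/k because the votes are split among k labels.  Hence the
  potential of |V| drops by at least 1 per mistake (in the logarithmic range because
  k ln(v/(v - c)) \<ge> k c/v \<ge> 1), while it stays nonnegative since the true expert never leaves V.
  Its initial value k ln(n/k) + k - 1 therefore bounds the number of mistakes.\<close>

definition version_space :: "nat \<Rightarrow> (nat list \<times> nat \<times> bool) list \<Rightarrow> nat set" where
  "version_space n h = {i \<in> {1..n}. \<forall>(x, p, b) \<in> set h. (expert i x = p) = b}"

definition votes :: "nat set \<Rightarrow> nat list \<Rightarrow> nat \<Rightarrow> nat" where
  "votes V x y = card {i \<in> V. expert i x = y}"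

definition majority_learner :: "nat \<Rightarrow> nat \<Rightarrow> learner" where
  "majority_learner n k h x = (ARG_MAX (votes (version_space n h) x) y. y \<in> {1..k})"

definition potential :: "nat \<Rightarrow> nat \<Rightarrow> real" where
  "potential k v = (if v \<le> k then real v - 1 else real k * ln (real v / real k) + real k - 1)"

lemma mult_ln_ratio_nonneg:
  assumes "k < v"
  shows "0 \<le> real k * ln (real v / real k)"
  using assms by (cases "k = 0") (auto intro!: ln_ge_zero)

lemma potential_small: "v \<le> k \<Longrightarrow> potential k v = real v - 1"
  by (simp add: potential_def)

lemma potential_large:
  "k \<le> v \<Longrightarrow> potential k v = real k * ln (real v / real k) + real k - 1"
  by (cases "v = k") (auto simp: potential_def)

lemma potential_mono:
  assumes "v \<le> w"
  shows "potential k v \<le> potential k w"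
proof (cases "w \<le> k")
  case True
  then show ?thesis using assms by (simp add: potential_def)
next
  case False
  then have "0 \<le> real k * ln (real w / real k)" by (simp add: mult_ln_ratio_nonneg)
  moreover have "real k * ln (real v / real k) \<le> real k * ln (real w / real k)" if "k < v"
    using that assms by (cases "k = 0") (auto intro!: mult_left_mono ln_mono divide_right_mono)
  ultimately show ?thesis using False by (auto simp: potential_def)
qed

lemma potential_nonneg:
  assumes "1 \<le> k" and "1 \<le> v"
  shows "0 \<le> potential k v"
proof (cases "v \<le> k")
  case True
  then show ?thesis using assms by (simp add: potential_small)
next
  case False
  then have "0 \<le> real k * ln (real v / real k)" by (simp add: mult_ln_ratio_nonneg)
  then show ?thesis using False assms potential_large[of k v] by linarith
qed

lemma potential_drop:
  assumes vc: "v \<le> k * c" and c: "1 \<le> c" "c < v"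
  shows "1 + potential k (v - c) \<le> potential k v"
proof (cases "v \<le> k")
  case True
  then show ?thesis using c by (simp add: potential_small)
next
  case False
  have "ln (real (v - c)) - ln (real v) \<le> (real (v - c) - real v) / real v"
    using c by (intro ln_diff_le) auto
  then have "real c / real v \<le> ln (real v / real (v - c))"
    using c by (simp add: ln_div diff_divide_distrib)
  moreover have "1 \<le> real k * (real c / real v)"
    using vc c by (simp add: field_simps flip: of_nat_mult)
  ultimately have gain: "1 \<le> real k * ln (real v / real (v - c))"
    by (meson mult_left_mono of_nat_0_le_iff order_trans)
  have pot_v: "potential k v = real k * ln (real v / real k) + real k - 1"
    using False by (simp add: potential_large)
  consider "v - c < k" | "k \<le> v - c" by linarith
  then show ?thesis
  proof cases
    case 1
    have "0 \<le> real k * ln (real v / real k)"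
      using False by (simp add: mult_ln_ratio_nonneg)
    then show ?thesis using 1 pot_v potential_small[of "v - c" k] by linarith
  next
    case 2
    have "0 < k" using vc c by (cases k) auto
    with 2 have "ln (real v / real k) = ln (real v / real (v - c)) + ln (real (v - c) / real k)"
      using c by (cases "v - c = k") (simp_all add: ln_div)
    then show ?thesis using 2 pot_v potential_large[OF 2] gain by (simp add: algebra_simps)
  qed
qed

lemma version_space_subset: "version_space n h \<subseteq> {1..n}"
  unfolding version_space_def by auto

lemma finite_version_space: "finite (version_space n h)"
  using finite_subset[OF version_space_subset] by blast

lemma version_space_Nil: "version_space n [] = {1..n}"
  unfolding version_space_def by auto

lemma version_space_snoc:
  "version_space n (h @ [(x, p, b)]) = {i \<in> version_space n h. (expert i x = p) = b}"
  unfolding version_space_def by auto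

lemma expert_in_labels:
  assumes "i \<in> {1..n}" and "x \<in> inst_space n k"
  shows "expert i x \<in> {1..k}"
proof -
  have "x ! (i - 1) \<in> set x" using assms by (auto simp: inst_space_def)
  then show ?thesis using assms(2) by (auto simp: inst_space_def expert_def)
qed

lemma card_eq_sum_votes:
  assumes "V \<subseteq> {1..n}" and "x \<in> inst_space n k"
  shows "card V = (\<Sum>y\<in>{1..k}. votes V x y)"
proof -
  have fin: "finite V" using assms(1) finite_subset by blast
  have "V = (\<Union>y\<in>{1..k}. {i \<in> V. expert i x = y})"
    using assms expert_in_labels by blast
  then have "card V = card (\<Union>y\<in>{1..k}. {i \<in> V. expert i x = y})" by simp
  also have "\<dots> = (\<Sum>y\<in>{1..k}. card {i \<in> V. expert i x = y})"
    by (rule card_UN_disjoint) (use fin in auto)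
  finally show ?thesis unfolding votes_def .
qed

lemma majority_learner_maximizes_votes:
  assumes "1 \<le> k"
  shows "majority_learner n k h x \<in> {1..k}"
    and "y \<in> {1..k} \<Longrightarrow> votes (version_space n h) x y
           \<le> votes (version_space n h) x (majority_learner n k h x)"
proof -
  have "votes (version_space n h) x y \<le> card {1..n}" for y
    unfolding votes_def using version_space_subset by (intro card_mono) auto
  then have "votes (version_space n h) x y < Suc n" for y
    by (simp add: le_imp_less_Suc)
  then show "majority_learner n k h x \<in> {1..k}"
    and "y \<in> {1..k} \<Longrightarrow> votes (version_space n h) x y
           \<le> votes (version_space n h) x (majority_learner n k h x)"
    unfolding majority_learner_def
    using assms arg_max_nat_lemma[of "\<lambda>y. y \<in> {1..k}" 1 "votes (version_space n h) x"]
    by auto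
qed

lemma majority_learner_in_bandit_learners:
  "1 \<le> k \<Longrightarrow> majority_learner n k \<in> bandit_learners k"
  unfolding bandit_learners_def using majority_learner_maximizes_votes(1) by blast

lemma card_version_space_le_majority_votes:
  assumes "1 \<le> k" and "x \<in> inst_space n k"
  shows "card (version_space n h)
           \<le> k * votes (version_space n h) x (majority_learner n k h x)"
proof -
  have "card (version_space n h) = (\<Sum>y\<in>{1..k}. votes (version_space n h) x y)"
    using card_eq_sum_votes[OF version_space_subset assms(2)] .
  also have "\<dots> \<le> (\<Sum>y\<in>{1..k}. votes (version_space n h) x (majority_learner n k h x))"
    using majority_learner_maximizes_votes(2)[OF assms(1)] by (intro sum_mono)
  finally show ?thesis by simp
qed

lemma potential_decreases_on_mistake:
  assumes k: "1 \<le> k" and i: "i \<in> version_space n h" and x: "x \<in> inst_space n k"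
    and p: "p = majority_learner n k h x" and wrong: "p \<noteq> expert i x"
  shows "1 + potential k (card (version_space n (h @ [(x, p, False)])))
           \<le> potential k (card (version_space n h))"
proof -
  define V where "V = version_space n h"
  define c where "c = votes V x p"
  have fin: "finite V" unfolding V_def by (rule finite_version_space)
  have after: "version_space n (h @ [(x, p, False)]) = V - {j \<in> V. expert j x = p}"
    unfolding version_space_snoc V_def by auto
  then have card_after: "card (version_space n (h @ [(x, p, False)])) = card V - c"
    unfolding c_def votes_def using fin by (simp add: card_Diff_subset)
  have "i \<in> version_space n (h @ [(x, p, False)])"
    using i wrong unfolding after V_def by simp
  then have "c < card V"
    using card_after finite_version_space by (metis card_gt_0_iff empty_iff zero_less_diff)
  have "1 \<le> votes V x (expert i x)"
    unfolding votes_def using i fin V_def by (auto simp: Suc_le_eq card_gt_0_iff)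
  also have "\<dots> \<le> c"
    unfolding c_def V_def p
    using majority_learner_maximizes_votes(2)[OF k] expert_in_labels i x version_space_subset
    by blast
  finally have "1 \<le> c" .
  moreover have "card V \<le> k * c"
    unfolding V_def c_def p using card_version_space_le_majority_votes[OF k x] .
  ultimately show ?thesis
    using potential_drop \<open>c < card V\<close> card_after V_def by simp
qed

lemma mistakes_majority_learner_le_potential:
  assumes k: "1 \<le> k" and "i \<in> version_space n h"
    and "\<forall>(x, y) \<in> set S. x \<in> inst_space n k \<and> y = expert i x"
  shows "real (mistakes (majority_learner n k) h S) \<le> potential k (card (version_space n h))"
  using assms(2,3)
proof (induction S arbitrary: h)
  case Nil
  then have "1 \<le> card (version_space n h)"
    using finite_version_space by (metis One_nat_def Suc_leI card_gt_0_iff empty_iff)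
  then show ?case using potential_nonneg[OF k] by simp
next
  case (Cons a S)
  obtain x where a: "a = (x, expert i x)" and x: "x \<in> inst_space n k"
    using Cons.prems(2) by auto
  define p where "p = majority_learner n k h x"
  define h' where "h' = h @ [(x, p, p = expert i x)]"
  have "i \<in> version_space n h'"
    using Cons.prems(1) unfolding h'_def version_space_snoc by auto
  then have IH: "real (mistakes (majority_learner n k) h' S)
                   \<le> potential k (card (version_space n h'))"
    using Cons.IH Cons.prems(2) by simp
  have step: "mistakes (majority_learner n k) h (a # S)
                = (if p = expert i x then 0 else 1) + mistakes (majority_learner n k) h' S"
    by (simp add: a Let_def p_def h'_def)
  show ?case
  proof (cases "p = expert i x")
    case True
    have "version_space n h' \<subseteq> version_space n h"
      unfolding h'_def version_space_snoc by auto
    then have "potential k (card (version_space n h')) \<le> potential k (card (version_space n h))"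
      by (intro potential_mono card_mono finite_version_space)
    then show ?thesis using IH True step by simp
  next
    case False
    then show ?thesis
      using IH step potential_decreases_on_mistake[OF k Cons.prems(1) x p_def False]
      by (simp add: h'_def)
  qed
qed

lemma opt_bandit_det_le:
  assumes "L \<in> bandit_learners k" and "0 \<le> B"
    and "\<And>S. S \<in> realizable_seqs n k \<Longrightarrow> real (mistakes L [] S) \<le> B"
  shows "\<exists>m. opt_bandit_det n k = enat m \<and> real m \<le> B"
proof -
  have "opt_bandit_det n k \<le> (SUP S\<in>realizable_seqs n k. enat (mistakes L [] S))"
    unfolding opt_bandit_det_def using assms(1) by (rule INF_lower)
  also have "\<dots> \<le> enat (nat \<lfloor>B\<rfloor>)"
    using assms(3) by (intro SUP_least) (simp add: le_nat_floor)
  finally obtain m where "opt_bandit_det n k = enat m" "m \<le> nat \<lfloor>B\<rfloor>"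
    by (metis enat_ile enat_ord_simps(1))
  moreover have "real (nat \<lfloor>B\<rfloor>) \<le> B" using assms(2) by linarith
  ultimately show ?thesis by (meson of_nat_le_iff order_trans)
qed

theorem corollary4p4:
  fixes n k :: nat
  assumes "2 \<le> k" and "k \<le> n"
  shows "\<exists>m. opt_bandit_det n k = enat m \<and>
           real m \<le> real k * ln (real n / real k) + real k - 1"
proof -
  have k: "1 \<le> k" using assms(1) by simp
  have bound: "real (mistakes (majority_learner n k) [] S) \<le> potential k n"
    if S: "S \<in> realizable_seqs n k" for S
  proof -
    obtain i where "i \<in> {1..n}" and "\<forall>(x, y) \<in> set S. x \<in> inst_space n k \<and> y = expert i x"
      using S unfolding realizable_seqs_def by fastforce
    then show ?thesis
      using mistakes_majority_learner_le_potential[OF k, of i n "[]" S]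
      by (simp add: version_space_Nil)
  qed
  have "0 \<le> potential k n" using potential_nonneg k assms(2) by simp
  then obtain m where "opt_bandit_det n k = enat m" and "real m \<le> potential k n"
    using opt_bandit_det_le[OF majority_learner_in_bandit_learners[OF k] _ bound] by blast
  then show ?thesis using potential_large[OF assms(2)] by auto
qed

end
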